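(* Let $A\subseteq\mathbb{Z}_N$ be a $B_t[N;1]$ set which contains $0$, and let $S\triangleq A\setminus\{0\}$. Then $\mathbb{Z}_N \ge \{1\} \diamond_t S$.
   Context: A subset $A\subseteq\mathbb{Z}_N$ is a $B_t[N;1]$ set if the sums of any $t$ (not necessarily distinct) elements of $A$ are all different modulo $N$, i.e., distinct multisets of $t$ elements of $A$ have distinct sums in $\mathbb{Z}_N$. For a finite Abelian group $G$, a finite set $M\subseteq\mathbb{Z}\setminus\{0\}$ and $S=\{s_1,\dots,s_n\}\subseteq G$, we write $G\ge M\diamond_t S$ (“$M$ partially $t$-splits $G$ with splitter set $S$”) if the elements $\mathbf{e}\cdot(s_1,\dots,s_n)=\sum_i e_is_i$, over all $\mathbf{e}\in(M\cup\{0\})^n$ with $1\le\mathrm{wt}(\mathbf{e})\le t$, are all distinct and non-zero in $G$. Here $e_is_i$ denotes the $e_i$-fold group multiple and $\mathrm{wt}$ is the Hamming weight. *)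

theory Defs
  imports Main "HOL-Library.Multiset"
begin

text \<open>Elements of Z_N are represented by integers in {0..<N}; equality in Z_N
is congruence mod N.\<close>

definition ZN :: "int \<Rightarrow> int set" where
  "ZN N = {0..<N}"

definition Bt_set :: "nat \<Rightarrow> int \<Rightarrow> int set \<Rightarrow> bool" where
  "Bt_set t N A \<longleftrightarrow> A \<subseteq> ZN N \<and>
     (\<forall>M1 M2. set_mset M1 \<subseteq> A \<longrightarrow> set_mset M2 \<subseteq> A \<longrightarrow> size M1 = t \<longrightarrow> size M2 = t \<longrightarrow>
        sum_mset M1 mod N = sum_mset M2 mod N \<longrightarrow> M1 = M2)"

definition coeff_vecs :: "int set \<Rightarrow> nat \<Rightarrow> int set \<Rightarrow> (int \<Rightarrow> int) set" where
  "coeff_vecs M t S = {e. (\<forall>s\<in>S. e s \<in> M \<union> {0}) \<and> (\<forall>s. s \<notin> S \<longrightarrow> e s = 0)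
      \<and> 1 \<le> card {s\<in>S. e s \<noteq> 0} \<and> card {s\<in>S. e s \<noteq> 0} \<le> t}"

text \<open>Z_N \<ge> M \<diamond>_t S: the sums e\<cdot>s over all such e are pairwise distinct and nonzero in Z_N.\<close>
definition partial_split :: "int \<Rightarrow> int set \<Rightarrow> nat \<Rightarrow> int set \<Rightarrow> bool" where
  "partial_split N M t S \<longleftrightarrow> S \<subseteq> ZN N \<and> finite S \<and> 0 \<notin> M \<and>
     inj_on (\<lambda>e. (\<Sum>s\<in>S. e s * s) mod N) (coeff_vecs M t S) \<and>
     (\<forall>e\<in>coeff_vecs M t S. (\<Sum>s\<in>S. e s * s) mod N \<noteq> 0)"

end

theory Submission
  imports Defs
begin

text \<open>A 0/1 coefficient vector of weight at most \<open>t\<close> is determined by its support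
\<open>T \<subseteq> A - {0}\<close>, and padding \<open>T\<close> with \<open>t - |T|\<close> copies of \<open>0 \<in> A\<close> turns it into a
multiset of exactly \<open>t\<close> elements of \<open>A\<close> with the same sum. The \<open>B\<^sub>t\<close> property
therefore separates the sums of distinct supports; comparing with the empty
support, whose padded multiset sums to \<open>0\<close>, shows that no sum vanishes.\<close>

definition padded_mset :: "nat \<Rightarrow> 'a::zero set \<Rightarrow> 'a multiset" where
  "padded_mset t T = mset_set T + replicate_mset (t - card T) 0"

lemma set_mset_padded_mset: "finite T \<Longrightarrow> set_mset (padded_mset t T) \<subseteq> insert 0 T"
  by (auto simp: padded_mset_def)

lemma size_padded_mset: "card T \<le> t \<Longrightarrow> size (padded_mset t T) = t"
  by (simp add: padded_mset_def)

lemma sum_mset_padded_mset: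
  fixes T :: "'a::comm_monoid_add set"
  shows "finite T \<Longrightarrow> sum_mset (padded_mset t T) = \<Sum>T"
  by (simp add: padded_mset_def sum_unfold_sum_mset sum_mset.neutral)

lemma padded_mset_inject:
  assumes "finite T1" "finite T2" "0 \<notin> T1" "0 \<notin> T2"
    and "padded_mset t T1 = padded_mset t T2"
  shows "T1 = T2"
proof -
  have count: "count (padded_mset t T) x = (if x \<in> T then 1 else 0)"
    if "finite T" "x \<noteq> 0" for T :: "'a set" and x
    using that by (simp add: padded_mset_def)
  have "x \<in> T1 \<longleftrightarrow> x \<in> T2" if "x \<noteq> 0" for x
  proof -
    have "count (padded_mset t T1) x = count (padded_mset t T2) x"
      using assms(5) by simp
    then show ?thesis
      unfolding count[OF assms(1) that] count[OF assms(2) that]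
      by (cases "x \<in> T1"; cases "x \<in> T2") simp_all
  qed
  with assms(3,4) show ?thesis
    by (metis set_eqI)
qed

lemma Bt_set_subset_sums_inj:
  assumes "Bt_set t N A" "0 \<in> A"
    and "T1 \<subseteq> A - {0}" "T2 \<subseteq> A - {0}" "card T1 \<le> t" "card T2 \<le> t"
    and "\<Sum>T1 mod N = \<Sum>T2 mod N"
  shows "T1 = T2"
proof -
  have "finite A"
    using assms(1) by (auto simp: Bt_set_def ZN_def dest: finite_subset)
  then have fin: "finite T1" "finite T2"
    using assms(3,4) by (meson Diff_subset finite_subset subset_trans)+
  have "set_mset (padded_mset t T1) \<subseteq> A" "set_mset (padded_mset t T2) \<subseteq> A"
    using set_mset_padded_mset[OF fin(1)] set_mset_padded_mset[OF fin(2)] assms(2-4) by blast+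
  then have "padded_mset t T1 = padded_mset t T2"
    using assms(1,5-7) fin
    by (simp add: Bt_set_def size_padded_mset sum_mset_padded_mset)
  moreover have "0 \<notin> T1" "0 \<notin> T2"
    using assms(3,4) by auto
  ultimately show ?thesis
    using padded_mset_inject fin by blast
qed

lemma coeff_vecs_one_eqI:
  assumes "e1 \<in> coeff_vecs {1} t S" "e2 \<in> coeff_vecs {1} t S"
    and "{s\<in>S. e1 s \<noteq> 0} = {s\<in>S. e2 s \<noteq> 0}"
  shows "e1 = e2"
proof
  fix s
  show "e1 s = e2 s"
  proof (cases "s \<in> S")
    case True
    then have "e1 s \<in> {0, 1}" "e2 s \<in> {0, 1}"
      using assms(1,2) by (auto simp: coeff_vecs_def)
    moreover have "e1 s \<noteq> 0 \<longleftrightarrow> e2 s \<noteq> 0"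
      using True assms(3) by blast
    ultimately show ?thesis
      by auto
  qed (use assms(1,2) in \<open>simp add: coeff_vecs_def\<close>)
qed

lemma sum_coeff_vecs_one:
  assumes "finite S" "e \<in> coeff_vecs {1} t S"
  shows "(\<Sum>s\<in>S. e s * s) = \<Sum>{s\<in>S. e s \<noteq> 0}"
proof -
  have "(\<Sum>s\<in>S. e s * s) = (\<Sum>s\<in>S. if e s \<noteq> 0 then s else 0)"
    using assms(2) by (intro sum.cong) (auto simp: coeff_vecs_def)
  also have "\<dots> = \<Sum>{s\<in>S. e s \<noteq> 0}"
    using assms(1) by (simp add: sum.inter_filter)
  finally show ?thesis .
qed

lemma partial_split_oneI:
  assumes "S \<subseteq> ZN N" "finite S"
    and sums_inj: "\<And>T1 T2. T1 \<subseteq> S \<Longrightarrow> T2 \<subseteq> S \<Longrightarrow> card T1 \<le> t \<Longrightarrow> card T2 \<le> t \<Longrightarrow>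
      \<Sum>T1 mod N = \<Sum>T2 mod N \<Longrightarrow> T1 = T2"
  shows "partial_split N {1} t S"
proof -
  define supp where "supp e = {s\<in>S. e s \<noteq> 0}" for e :: "int \<Rightarrow> int"
  have supp: "supp e \<subseteq> S" "card (supp e) \<le> t" "supp e \<noteq> {}"
    and sum: "(\<Sum>s\<in>S. e s * s) = \<Sum>(supp e)" if "e \<in> coeff_vecs {1} t S" for e
  proof -
    have "1 \<le> card (supp e)" "card (supp e) \<le> t"
      using that by (simp_all add: supp_def coeff_vecs_def)
    then show "card (supp e) \<le> t" "supp e \<noteq> {}"
      by auto
    show "supp e \<subseteq> S" "(\<Sum>s\<in>S. e s * s) = \<Sum>(supp e)"
      using sum_coeff_vecs_one[OF \<open>finite S\<close> that] by (auto simp: supp_def)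
  qed
  have "inj_on (\<lambda>e. (\<Sum>s\<in>S. e s * s) mod N) (coeff_vecs {1} t S)"
  proof (rule inj_onI)
    fix e1 e2
    assume e1: "e1 \<in> coeff_vecs {1} t S" and e2: "e2 \<in> coeff_vecs {1} t S"
      and "(\<Sum>s\<in>S. e1 s * s) mod N = (\<Sum>s\<in>S. e2 s * s) mod N"
    then have "supp e1 = supp e2"
      by (intro sums_inj supp(1,2)) (simp_all add: sum)
    then show "e1 = e2"
      using coeff_vecs_one_eqI[OF e1 e2] by (simp add: supp_def)
  qed
  moreover have "(\<Sum>s\<in>S. e s * s) mod N \<noteq> 0" if "e \<in> coeff_vecs {1} t S" for e
  proof
    assume "(\<Sum>s\<in>S. e s * s) mod N = 0"
    then have "supp e = {}"
      by (intro sums_inj supp(1,2)[OF that]) (simp_all add: sum[OF that])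
    with supp(3)[OF that] show False ..
  qed
  ultimately show ?thesis
    using assms(1,2) by (simp add: partial_split_def)
qed

theorem theorem8:
  fixes N :: int and t :: nat and A :: "int set"
  assumes "0 < N"
    and "Bt_set t N A"
    and "0 \<in> A"
  shows "partial_split N {1} t (A - {0})"
proof (rule partial_split_oneI)
  show "A - {0} \<subseteq> ZN N" "finite (A - {0})"
    using assms(2) by (auto simp: Bt_set_def ZN_def dest: finite_subset)
qed (use Bt_set_subset_sums_inj[OF assms(2,3)] in blast)

end
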